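(* For every integer $d\geq 0$, $\chi_{td}(Q_d) \leq 2^{d+1}-1$, where $Q_d$ is the $d$-dimensional hypercube graph.
   Context: $Q_d$ is the graph with vertex set $\{0,1\}^d$ in which two vertices are adjacent iff they differ in exactly one coordinate ($Q_0$ is a single vertex). For a simple graph $G$ and a positive integer $k$, a proper $k$-total difference labeling of $G$ is a function $f: V(G)\to\{1,\dots,k\}$, extended to edges by $f(\{u,v\}) = |f(u)-f(v)|$, such that: (i) adjacent vertices receive different labels; (ii) two distinct edges sharing a vertex receive different labels; (iii) no edge receives the same label as either of its endpoints. $\chi_{td}(G)$ denotes the smallest $k$ for which such a labeling exists. *)

theory Defs
  imports Main
begin

(* A simple graph is given by a vertex set V and a symmetric irreflexive
   adjacency relation adj on V. Edges are the sets {u,v} with adj u v. *)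

definition edge_label :: "('a \<Rightarrow> nat) \<Rightarrow> 'a \<Rightarrow> 'a \<Rightarrow> nat" where
  "edge_label f u v = (if f u \<le> f v then f v - f u else f u - f v)"

definition proper_total_diff_labeling ::
  "'a set \<Rightarrow> ('a \<Rightarrow> 'a \<Rightarrow> bool) \<Rightarrow> nat \<Rightarrow> ('a \<Rightarrow> nat) \<Rightarrow> bool" where
  "proper_total_diff_labeling V adj k f \<longleftrightarrow>
     (\<forall>v\<in>V. 1 \<le> f v \<and> f v \<le> k) \<and>
     (\<forall>u\<in>V. \<forall>v\<in>V. adj u v \<longrightarrow> f u \<noteq> f v) \<and>
     (\<forall>u\<in>V. \<forall>v\<in>V. \<forall>w\<in>V. adj u v \<longrightarrow> adj u w \<longrightarrow> v \<noteq> w \<longrightarrow>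
         edge_label f u v \<noteq> edge_label f u w) \<and>
     (\<forall>u\<in>V. \<forall>v\<in>V. adj u v \<longrightarrow> edge_label f u v \<noteq> f u \<and> edge_label f u v \<noteq> f v)"

definition chi_td :: "'a set \<Rightarrow> ('a \<Rightarrow> 'a \<Rightarrow> bool) \<Rightarrow> nat" where
  "chi_td V adj = (LEAST k. 0 < k \<and> (\<exists>f. proper_total_diff_labeling V adj k f))"

definition hypercube_vertices :: "nat \<Rightarrow> bool list set" where
  "hypercube_vertices d = {xs. length xs = d}"

definition hypercube_adj :: "bool list \<Rightarrow> bool list \<Rightarrow> bool" where
  "hypercube_adj xs ys \<longleftrightarrow> length xs = length ys \<and>
     card {i. i < length xs \<and> xs ! i \<noteq> ys ! i} = 1"

end

theory Submission
  imports Defs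
begin

text \<open>Label each vertex x of Q_d by the odd number 1 + 2 b(x), where b(x) is the integer with
  binary digits x. Neighbours differ in a single bit i, so the induced edge label is 2^(i+1):
  it is even, hence different from both (odd) endpoint labels, and the edges at a vertex
  flip different bits, hence carry different labels. The largest label is 2^(d+1) - 1.\<close>

lemma chi_td_le:
  assumes "proper_total_diff_labeling V adj k f" and "0 < k"
  shows "chi_td V adj \<le> k"
  unfolding chi_td_def using assms by (blast intro: Least_le)

lemma hypercube_adj_imp_flip:
  assumes "hypercube_adj u v"
  obtains i where "i < length u" and "v = u[i := \<not> u ! i]"
proof -
  from assms have len: "length v = length u"
    and "card {i. i < length u \<and> u ! i \<noteq> v ! i} = 1"
    unfolding hypercube_adj_def by auto
  then obtain i where i: "{i. i < length u \<and> u ! i \<noteq> v ! i} = {i}"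
    using card_1_singletonE by blast
  then have "i < length u" by blast
  moreover have "v = u[i := \<not> u ! i]"
  proof (rule nth_equalityI)
    fix j assume "j < length v"
    with i len show "v ! j = u[i := \<not> u ! i] ! j"
      by (cases "j = i") auto
  qed (simp add: len)
  ultimately show thesis by (rule that)
qed

lemma horner_sum_update_True:
  assumes "i < length xs"
  shows "horner_sum of_bool 2 (xs[i := True]) = horner_sum of_bool (2::nat) (xs[i := False]) + 2 ^ i"
  using assms
proof (induction xs arbitrary: i)
  case (Cons x xs)
  then show ?case by (cases i) auto
qed simp

definition odd_binary_label :: "bool list \<Rightarrow> nat" where
  "odd_binary_label xs = 1 + 2 * horner_sum of_bool 2 xs"

lemma edge_label_eq_diff:
  assumes "f v = f u + c \<or> f u = f v + c"
  shows "edge_label f u v = c"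
  using assms by (auto simp: edge_label_def)

lemma edge_label_odd_binary_label_flip:
  assumes "i < length u"
  shows "edge_label odd_binary_label u (u[i := \<not> u ! i]) = 2 ^ Suc i"
proof (rule edge_label_eq_diff)
  have step: "odd_binary_label (u[i := True]) = odd_binary_label (u[i := False]) + 2 ^ Suc i"
    using horner_sum_update_True[OF assms] by (simp add: odd_binary_label_def)
  show "odd_binary_label (u[i := \<not> u ! i]) = odd_binary_label u + 2 ^ Suc i \<or>
        odd_binary_label u = odd_binary_label (u[i := \<not> u ! i]) + 2 ^ Suc i"
  proof (cases "u ! i")
    case True
    then have "u[i := True] = u" using list_update_id[of u i] by simp
    with True step show ?thesis by simp
  next
    case False
    then have "u[i := False] = u" using list_update_id[of u i] by simp
    with False step show ?thesis by simp
  qed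
qed

lemma edge_label_odd_binary_label:
  assumes "hypercube_adj u v"
  obtains i where "i < length u" and "v = u[i := \<not> u ! i]"
    and "edge_label odd_binary_label u v = 2 ^ Suc i"
proof -
  obtain i where i: "i < length u" and v: "v = u[i := \<not> u ! i]"
    using assms by (rule hypercube_adj_imp_flip)
  moreover have "edge_label odd_binary_label u v = 2 ^ Suc i"
    unfolding v using i by (rule edge_label_odd_binary_label_flip)
  ultimately show thesis by (rule that)
qed

lemma odd_binary_label_bound:
  "1 \<le> odd_binary_label xs \<and> odd_binary_label xs \<le> 2 ^ (length xs + 1) - 1"
proof -
  have "horner_sum of_bool 2 xs < (2::nat) ^ length xs" by (rule horner_sum_bound)
  then show ?thesis unfolding odd_binary_label_def by simp
qed

lemma proper_total_diff_labeling_odd_binary_label: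
  "proper_total_diff_labeling (hypercube_vertices d) hypercube_adj (2 ^ (d + 1) - 1) odd_binary_label"
  unfolding proper_total_diff_labeling_def
proof (intro conjI ballI impI)
  fix v assume "v \<in> hypercube_vertices d"
  then have "length v = d" by (simp add: hypercube_vertices_def)
  then show "1 \<le> odd_binary_label v" and "odd_binary_label v \<le> 2 ^ (d + 1) - 1"
    using odd_binary_label_bound[of v] by auto
next
  fix u v assume "hypercube_adj u v"
  then obtain i where lab: "edge_label odd_binary_label u v = 2 ^ Suc i"
    by (rule edge_label_odd_binary_label)
  have "even (edge_label odd_binary_label u v)" using lab by simp
  moreover have "odd (odd_binary_label x)" for x by (simp add: odd_binary_label_def)
  ultimately show "edge_label odd_binary_label u v \<noteq> odd_binary_label u"
    and "edge_label odd_binary_label u v \<noteq> odd_binary_label v"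
    by metis+
  show "odd_binary_label u \<noteq> odd_binary_label v"
    using lab by (auto simp: edge_label_def)
next
  fix u v w assume "hypercube_adj u v" "hypercube_adj u w" "v \<noteq> w"
  obtain i where v: "v = u[i := \<not> u ! i]"
    and lab_v: "edge_label odd_binary_label u v = 2 ^ Suc i"
    using \<open>hypercube_adj u v\<close> by (rule edge_label_odd_binary_label)
  obtain k where w: "w = u[k := \<not> u ! k]"
    and lab_w: "edge_label odd_binary_label u w = 2 ^ Suc k"
    using \<open>hypercube_adj u w\<close> by (rule edge_label_odd_binary_label)
  show "edge_label odd_binary_label u v \<noteq> edge_label odd_binary_label u w"
  proof
    assume "edge_label odd_binary_label u v = edge_label odd_binary_label u w"
    with lab_v lab_w have "i = k" by simp
    with v w \<open>v \<noteq> w\<close> show False by simp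
  qed
qed

theorem mainTheorem9:
  fixes d :: nat
  shows "chi_td (hypercube_vertices d) hypercube_adj \<le> 2 ^ (d + 1) - 1"
proof (rule chi_td_le[OF proper_total_diff_labeling_odd_binary_label])
  show "0 < (2::nat) ^ (d + 1) - 1"
    using one_less_power[of "2::nat" "d + 1"] by simp
qed

end
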